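(* Let $\mathcal E:l+m\to l+n$ be an roPG and $i\in[m]$. Then $[\![\pi^{\mathrm{tr}^l_{m,n}(\mathcal E)}_i]\!]=[\![v^{\mathcal E}_i]\!]$, where $v^{\mathcal E}_i$ is the traced denotation of plays of $\mathcal E$ from $i$.
   Context: Notation: $[k]=\{1,\dots,k\}$; $X+Y$ disjoint union. An roMPG $\mathcal A:m\to n$ is a tuple $(m,n,Q,E,\rho,w)$: $Q$ finite set of positions, entrances $[m]$, exits $[n]$ (pairwise disjoint with $Q$), edges $E\subseteq([m]+Q)\times([n]+Q)$ with each entrance having exactly one successor and each exit at most one predecessor, $\rho:Q\to\{\exists,\forall\}$, $w:Q\to\mathbb R$. An roPG is an roMPG in which each element of $[m]+Q$ has at most one successor. For $\mathcal E:l+m\to l+n$, the trace $\mathrm{tr}^l_{m,n}(\mathcal E):m\to n$ has the positions, roles and weights of $\mathcal E$, and $(s,s')\in([m]+Q)\times([n]+Q)$ is an edge iff there exist $k\ge0$ and $i_1,\dots,i_k\in[l]$ with $(\hat s,i_1),(i_1,i_2),\dots,(i_k,\hat s')\in E^{\mathcal E}$ (for $k=0$: $(\hat s,\hat s')\in E^{\mathcal E}$), where $i_j$ is read as an exit when the target and as an entrance when the source of an edge, and $\hat s=l+s$ if $s$ is an entrance/exit, $\hat s=s$ if $s\in Q$. Plays: for an roPG $\mathcal C:m\to n$ and entrance $i$, $\pi^{\mathcal C}_i=(s_j)_{j\in J}$ ($J=\{0,..,M\}$ or $\mathbb N$) is the unique maximal sequence with $s_0=i$ and $(s_j,s_{j+1})\in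 E$. An infinite play satisfies the MP condition if $\liminf_N\frac1N\sum_{j=1}^Nw(s_j)\ge0$. $T(X)=X+\mathbb R\times X+\{\exists^*,\forall^*\}$. Denotation $[\![\pi]\!]\in T([n])$: $s_1$ if $J=\{0,1\}$ and $s_1$ is an exit; $(\sum_{j=1}^{M-1}w(s_j),s_M)$ if $M\ge2$ and $s_M$ is an exit; $\exists^*$ if $J$ finite and $s_M$ is a $\forall$-position, or $J$ infinite satisfying MP; $\forall^*$ if $J$ finite and $s_M$ is an $\exists$-position, or $J$ infinite failing MP. Traced denotation of plays (TDP). For the roPG $\mathcal E:l+m\to l+n$ let $f(j)=[\![\pi^{\mathcal E}_j]\!]\in T([l+n])$ for $j\in[l+m]$. The TDP $v^{\mathcal E}_i$ is the sequence with $v_0=l+i$ (the entrance corresponding to $i$) and: if $j=0$ or $v_j\in[l]$ then $v_{j+1}=f(v_j)$; if $v_j=(r,k)$ with $k\in[l]$ then $v_{j+1}=f(k)$; otherwise (i.e. $j\ge1$ and $v_j\in\{l+1,..,l+n\}\cup\mathbb R\times\{l+1,..,l+n\}\cup\{\exists^*,\forall^*\}$) the sequence stops at $v_j$. Its denotation $[\![v]\!]\in T([n])$: if $v=(v_0,..,v_K)$ is finite, let $S$ be the sum of the first components of all $v_j\in\mathbb R\times[l+n]$, $1\le j\le K$; then $[\![v]\!]=v_K$ if $v_K\in\{\exists^*,\forall^*\}$; $=k$ if $v_K=l+k$ and $v_j\in[l]$ for all $1\le j<K$; $=(S,k)$ if $v_K=l+k$ and some $v_j$ ($1\le j<K$)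 lies in $\mathbb R\times[l]$; $=(S,k)$ if $v_K=(r,l+k)$. If $v$ is infinite, then all $v_j$ ($j\ge1$) lie in $[l]\cup\mathbb R\times[l]$ and infinitely many lie in $\mathbb R\times[l]$; let $w'_1,w'_2,\dots$ be their first components in order; $v$ satisfies the MP condition if $\liminf_N\frac1N\sum_{t=1}^Nw'_t\ge0$, and $[\![v]\!]=\exists^*$ if so, $\forall^*$ otherwise. *)

theory Defs
  imports "HOL-Analysis.Analysis"
begin

datatype player = PEx | PAll

(* Nodes of a game: entrances, exits (both 1-indexed naturals) and positions *)
datatype 'q node = Entr nat | Exit nat | Pos 'q

record 'q roMPG =
  ent   :: nat
  ex    :: nat
  pos   :: "'q set"
  edges :: "('q node \<times> 'q node) set"
  role  :: "'q \<Rightarrow> player"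
  wt    :: "'q \<Rightarrow> real"

definition srcs :: "nat \<Rightarrow> 'q set \<Rightarrow> 'q node set" where
  "srcs m Q = Entr ` {1..m} \<union> Pos ` Q"

definition tgts :: "nat \<Rightarrow> 'q set \<Rightarrow> 'q node set" where
  "tgts n Q = Exit ` {1..n} \<union> Pos ` Q"

definition is_roMPG :: "'q roMPG \<Rightarrow> bool" where
  "is_roMPG A \<longleftrightarrow> finite (pos A)
     \<and> edges A \<subseteq> srcs (ent A) (pos A) \<times> tgts (ex A) (pos A)
     \<and> (\<forall>i\<in>{1..ent A}. \<exists>!t. (Entr i, t) \<in> edges A)
     \<and> (\<forall>k\<in>{1..ex A}. \<forall>s s'. (s, Exit k) \<in> edges A \<longrightarrow> (s', Exit k) \<in> edges A \<longrightarrow> s = s')"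

definition is_roPG :: "'q roMPG \<Rightarrow> bool" where
  "is_roPG A \<longleftrightarrow> is_roMPG A
     \<and> (\<forall>s t t'. (s, t) \<in> edges A \<longrightarrow> (s, t') \<in> edges A \<longrightarrow> t = t')"

fun hat :: "nat \<Rightarrow> 'q node \<Rightarrow> 'q node" where
  "hat l (Entr i) = Entr (l + i)"
| "hat l (Exit k) = Exit (l + k)"
| "hat l (Pos q) = Pos q"

fun chain :: "('q node \<times> 'q node) set \<Rightarrow> 'q node \<Rightarrow> nat list \<Rightarrow> 'q node \<Rightarrow> bool" where
  "chain E x [] y \<longleftrightarrow> (x, y) \<in> E"
| "chain E x (i # is) y \<longleftrightarrow> (x, Exit i) \<in> E \<and> chain E (Entr i) is y"

definition trace :: "nat \<Rightarrow> nat \<Rightarrow> nat \<Rightarrow> 'q roMPG \<Rightarrow> 'q roMPG" where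
  "trace l m n A = \<lparr> ent = m, ex = n, pos = pos A,
     edges = {(s, t). s \<in> srcs m (pos A) \<and> t \<in> tgts n (pos A) \<and>
                (\<exists>is. set is \<subseteq> {1..l} \<and> chain (edges A) (hat l s) is (hat l t))},
     role = role A, wt = wt A \<rparr>"

datatype 'x T = Plain 'x | Weighted real 'x | EStar | AStar

(* mean-payoff condition for a sequence indexed from 1 *)
definition mp_ok :: "(nat \<Rightarrow> real) \<Rightarrow> bool" where
  "mp_ok x \<longleftrightarrow> liminf (\<lambda>N. ereal ((\<Sum>j=1..N. x j) / real N)) \<ge> 0"

definition succ :: "'q roMPG \<Rightarrow> 'q node \<Rightarrow> 'q node option" where
  "succ A s = (if \<exists>t. (s, t) \<in> edges A then Some (THE t. (s, t) \<in> edges A) else None)"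

(* the play from entrance i: play A i j = Some s_j for j in J, None outside J *)
primrec play :: "'q roMPG \<Rightarrow> nat \<Rightarrow> nat \<Rightarrow> 'q node option" where
  "play A i 0 = Some (Entr i)"
| "play A i (Suc j) = Option.bind (play A i j) (succ A)"

fun posw :: "'q roMPG \<Rightarrow> 'q node \<Rightarrow> real" where
  "posw A (Pos q) = wt A q"
| "posw A _ = 0"

definition play_den :: "'q roMPG \<Rightarrow> nat \<Rightarrow> nat T" where
  "play_den A i =
    (if \<exists>j. play A i j = None then
       (let M = (LEAST j. play A i (Suc j) = None) in
        case the (play A i M) of
          Exit k \<Rightarrow> (if M = 1 then Plain k
                     else if M \<ge> 2 then Weighted (\<Sum>j=1..M-1. posw A (the (play A i j))) k
                     else undefined)
        | Pos q \<Rightarrow> (if role A q = PAll then EStar else AStar)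
        | Entr _ \<Rightarrow> undefined)
     else (if mp_ok (\<lambda>j. posw A (the (play A i j))) then EStar else AStar))"

fun tstep :: "nat \<Rightarrow> (nat \<Rightarrow> nat T) \<Rightarrow> nat T \<Rightarrow> nat T option" where
  "tstep l f (Plain k) = (if k \<in> {1..l} then Some (f k) else None)"
| "tstep l f (Weighted r k) = (if k \<in> {1..l} then Some (f k) else None)"
| "tstep l f _ = None"

(* v 0 = l+i (represented as Plain (l+i)); v j = Some v_j for j in index set, None outside *)
primrec tdp :: "nat \<Rightarrow> (nat \<Rightarrow> nat T) \<Rightarrow> nat \<Rightarrow> nat \<Rightarrow> nat T option" where
  "tdp l f i 0 = Some (Plain (l + i))"
| "tdp l f i (Suc j) = (if j = 0 then Some (f (l + i)) else Option.bind (tdp l f i j) (tstep l f))"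

fun twt :: "nat T \<Rightarrow> real" where
  "twt (Weighted r k) = r"
| "twt _ = 0"

definition in_l :: "nat \<Rightarrow> nat T \<Rightarrow> bool" where
  "in_l l x \<longleftrightarrow> (\<exists>k\<in>{1..l}. x = Plain k)"

definition weighted_l :: "nat \<Rightarrow> nat T \<Rightarrow> bool" where
  "weighted_l l x \<longleftrightarrow> (\<exists>r. \<exists>k\<in>{1..l}. x = Weighted r k)"

definition tdp_den :: "nat \<Rightarrow> (nat \<Rightarrow> nat T option) \<Rightarrow> nat T" where
  "tdp_den l v =
    (if \<exists>j. v j = None then
       (let K = (LEAST j. v (Suc j) = None);
            S = (\<Sum>j=1..K. twt (the (v j))) in
        case the (v K) of
          EStar \<Rightarrow> EStar
        | AStar \<Rightarrow> AStar
        | Plain x \<Rightarrow> (if x > l \<and> (\<forall>j\<in>{1..<K}. in_l l (the (v j))) then Plain (x - l)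
                     else if x > l \<and> (\<exists>j\<in>{1..<K}. weighted_l l (the (v j))) then Weighted S (x - l)
                     else undefined)
        | Weighted r x \<Rightarrow> (if x > l then Weighted S (x - l) else undefined))
     else
       (let J = {j. j \<ge> 1 \<and> weighted_l l (the (v j))};
            w' = (\<lambda>t. twt (the (v (Infinite_Set.enumerate J (t - 1))))) in
        if infinite J \<and> mp_ok w' then EStar else AStar))"

end

(*
  The traced play from entrance i is the concatenation of the plays of E that the traced
  denotation of plays runs through: when an E-play leaves through a feedback exit k <= l, the
  trace continues as the E-play from entrance k, visiting the same positions with the same
  weights. The invariant synced ties the traced play, after the moves made during the first t
  segments, to the entrance of E where segment t+1 starts. If the traced denotation stops, its
  last segment ends at an outer exit, at a dead end or in an infinite E-play, and the traced play
  ends in the same way after the accumulated prefix. If it runs forever, it has infinitely many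
  weighted segments: exits have unique predecessors, so a run of direct edges Entr k -> Exit k'
  never revisits an entrance. Each weighted segment contributes between 1 and |Q| moves, and
  regrouping a bounded sequence into blocks of bounded length preserves the mean-payoff
  condition.
*)

theory Submission
  imports Defs
begin

section \<open>The mean-payoff condition under regrouping\<close>

lemma mp_ok_iff_eventually:
  "mp_ok x \<longleftrightarrow> (\<forall>e>0. eventually (\<lambda>N. - e * real N \<le> (\<Sum>j=1..N. x j)) sequentially)"
  (is "_ \<longleftrightarrow> (\<forall>e>0. eventually (?lower e) sequentially)")
proof
  assume ok: "mp_ok x"
  show "\<forall>e>0. eventually (?lower e) sequentially"
  proof (intro allI impI)
    fix e :: real assume "e > 0"
    then have "ereal (- e) < 0" by simp
    then have "eventually (\<lambda>N. ereal (- e) < ereal ((\<Sum>j=1..N. x j) / real N)) sequentially"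
      using ok unfolding mp_ok_def le_Liminf_iff by blast
    with eventually_ge_at_top[of 1] show "eventually (?lower e) sequentially"
      by eventually_elim (simp add: field_simps)
  qed
next
  assume lower: "\<forall>e>0. eventually (?lower e) sequentially"
  show "mp_ok x"
    unfolding mp_ok_def le_Liminf_iff
  proof (intro allI impI)
    fix y :: ereal assume "y < 0"
    show "eventually (\<lambda>N. y < ereal ((\<Sum>j=1..N. x j) / real N)) sequentially"
    proof (cases y)
      case (real r)
      with \<open>y < 0\<close> have r: "r < 0" by simp
      with lower have "eventually (?lower (- r / 2)) sequentially" by (meson half_gt_zero neg_0_less_iff_less)
      with eventually_ge_at_top[of 1] show ?thesis
      proof eventually_elim
        case (elim N)
        then have "r / 2 \<le> (\<Sum>j=1..N. x j) / real N" by (simp add: field_simps)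
        then have "r < (\<Sum>j=1..N. x j) / real N" using r by linarith
        then show ?case using real by simp
      qed
    qed (use \<open>y < 0\<close> in simp_all)
  qed
qed

lemma eventually_le_linear:
  assumes "e > (0::real)"
  shows "eventually (\<lambda>N. K \<le> e * real N) sequentially"
  unfolding eventually_sequentially
proof (intro exI allI impI)
  fix N assume "nat \<lceil>K / e\<rceil> \<le> N"
  then have "K / e \<le> real N" by linarith
  then show "K \<le> e * real N" using assms by (simp add: field_simps)
qed

lemma strict_mono_block_index:
  fixes c :: "nat \<Rightarrow> nat"
  assumes "strict_mono c" "c 0 \<le> N"
  obtains U where "c U \<le> N" "N < c (Suc U)"
proof
  define U where "U = (LEAST U. N < c (Suc U))"
  have "N < c (Suc N)" using seq_suble[OF assms(1), of "Suc N"] by simp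
  then show "N < c (Suc U)" unfolding U_def by (rule LeastI)
  show "c U \<le> N"
  proof (cases U)
    case (Suc U')
    then have "\<not> N < c (Suc U')" unfolding U_def using not_less_Least lessI by metis
    then show ?thesis using Suc by simp
  qed (use assms(2) in simp)
qed

lemma mp_ok_block_sums_if_mp_ok:
  fixes x w :: "nat \<Rightarrow> real" and c :: "nat \<Rightarrow> nat"
  assumes c: "strict_mono c" and gaps: "\<And>U. c (Suc U) \<le> c U + C"
    and sums: "\<And>U. (\<Sum>j=1..c U. x j) = P + (\<Sum>u=1..U. w u)"
    and ok: "mp_ok x"
  shows "mp_ok w"
  unfolding mp_ok_iff_eventually
proof (intro allI impI)
  fix e :: real assume e: "e > 0"
  have C: "C \<ge> 1" using strict_monoD[OF c, of 0 1] gaps[of 0] by simp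
  have c_le: "c U \<le> c 0 + C * U" for U
  proof (induction U)
    case (Suc U)
    then show ?case using gaps[of U] by simp
  qed simp
  define d where "d = e / (2 * C)"
  have d: "d > 0" "d * C = e / 2" using e C by (simp_all add: d_def)
  have "eventually (\<lambda>N. - d * real N \<le> (\<Sum>j=1..N. x j)) sequentially"
    using ok d(1) unfolding mp_ok_iff_eventually by blast
  then have "eventually (\<lambda>U. - d * real (c U) \<le> (\<Sum>j=1..c U. x j)) sequentially"
    using filterlim_subseq[OF c] unfolding filterlim_iff by blast
  moreover have "eventually (\<lambda>U. d * c 0 + P \<le> e / 2 * real U) sequentially"
    using e by (intro eventually_le_linear) simp
  ultimately show "eventually (\<lambda>U. - e * real U \<le> (\<Sum>u=1..U. w u)) sequentially"
  proof eventually_elim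
    case (elim U)
    have "real (c U) \<le> c 0 + C * real U" using c_le[of U] by (metis of_nat_add of_nat_le_iff of_nat_mult)
    then have "d * c U \<le> d * c 0 + e / 2 * real U"
      using d by (metis distrib_left mult.assoc mult_left_mono less_imp_le)
    with elim sums[of U] show ?case by linarith
  qed
qed

lemma mp_ok_if_mp_ok_block_sums:
  fixes x w :: "nat \<Rightarrow> real" and c :: "nat \<Rightarrow> nat"
  assumes c: "strict_mono c" and gaps: "\<And>U. c (Suc U) \<le> c U + C"
    and bounded: "\<And>j. \<bar>x j\<bar> \<le> B"
    and sums: "\<And>U. (\<Sum>j=1..c U. x j) = P + (\<Sum>u=1..U. w u)"
    and ok: "mp_ok w"
  shows "mp_ok x"
  unfolding mp_ok_iff_eventually
proof (intro allI impI)
  fix e :: real assume e: "e > 0"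
  have "eventually (\<lambda>U. - (e / 2) * real U \<le> (\<Sum>u=1..U. w u)) sequentially"
    using ok e unfolding mp_ok_iff_eventually by (meson half_gt_zero)
  then obtain U0 where U0: "\<And>U. U0 \<le> U \<Longrightarrow> - (e / 2) * real U \<le> (\<Sum>u=1..U. w u)"
    unfolding eventually_sequentially by blast
  have "eventually (\<lambda>N. c U0 \<le> N) sequentially" by (rule eventually_ge_at_top)
  moreover have "eventually (\<lambda>N. C * B - P \<le> e / 2 * real N) sequentially"
    using e by (intro eventually_le_linear) simp
  ultimately show "eventually (\<lambda>N. - e * real N \<le> (\<Sum>j=1..N. x j)) sequentially"
  proof eventually_elim
    case (elim N)
    have "c 0 \<le> N" using elim(1) strict_mono_less_eq[OF c, of 0 U0] by simp
    then obtain U where U: "c U \<le> N" "N < c (Suc U)" by (rule strict_mono_block_index[OF c])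
    have "U0 \<le> U"
      using elim(1) U(2) strict_mono_less_eq[OF c, of "Suc U" U0] by (meson not_less_eq_eq order_trans not_le)
    have "U \<le> N" using seq_suble[OF c, of U] U(1) by simp
    have "(\<Sum>j=c U+1..N. - B) \<le> (\<Sum>j=c U+1..N. x j)"
      using bounded by (intro sum_mono) (metis abs_le_iff minus_le_iff)
    then have "- (real (N - c U) * B) \<le> (\<Sum>j=c U+1..N. x j)" by simp
    moreover have "real (N - c U) * B \<le> C * B"
      using U(2) gaps[of U] bounded[of 0] by (intro mult_right_mono) auto
    moreover have "(\<Sum>j=1..N. x j) = (\<Sum>j=1..c U. x j) + (\<Sum>j=c U+1..N. x j)"
      using sum.ub_add_nat[of 1 "c U" x "N - c U"] U(1) by simp
    moreover have "e / 2 * real U \<le> e / 2 * real N" using \<open>U \<le> N\<close> e by simp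
    ultimately show ?case using U0[OF \<open>U0 \<le> U\<close>] sums[of U] elim(2) by linarith
  qed
qed

lemma mp_ok_iff_block_sums:
  fixes x w :: "nat \<Rightarrow> real" and c :: "nat \<Rightarrow> nat"
  assumes "strict_mono c" "\<And>U. c (Suc U) \<le> c U + C" "\<And>j. \<bar>x j\<bar> \<le> B"
    "\<And>U. (\<Sum>j=1..c U. x j) = P + (\<Sum>u=1..U. w u)"
  shows "mp_ok x \<longleftrightarrow> mp_ok w"
  using mp_ok_block_sums_if_mp_ok[of c C x P w] mp_ok_if_mp_ok_block_sums[of c C x B P w] assms
  by blast

section \<open>Plays and traced denotations of plays\<close>

lemma succ_eq_None_iff: "succ A x = None \<longleftrightarrow> (\<nexists>y. (x, y) \<in> edges A)"
  unfolding succ_def by auto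

lemma succ_eq_Some_iff:
  assumes deterministic: "\<And>t t'. (x, t) \<in> edges A \<Longrightarrow> (x, t') \<in> edges A \<Longrightarrow> t = t'"
  shows "succ A x = Some y \<longleftrightarrow> (x, y) \<in> edges A"
proof
  assume "succ A x = Some y"
  then show "(x, y) \<in> edges A"
    unfolding succ_def using deterministic by (metis (mono_tags, lifting) option.distinct(1) option.inject theI)
next
  assume "(x, y) \<in> edges A"
  then show "succ A x = Some y"
    unfolding succ_def using deterministic by auto
qed

lemma Least_Suc_eq_None:
  assumes mono: "\<And>j k. f j = None \<Longrightarrow> j \<le> k \<Longrightarrow> f k = None"
    and "f M \<noteq> None" "f (Suc M) = None"
  shows "(LEAST j. f (Suc j) = None) = M"
proof (rule Least_equality)
  fix j assume "f (Suc j) = None"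
  then show "M \<le> j" using mono[of "Suc j" M] assms(2) by fastforce
qed (fact assms(3))

lemma play_None_mono:
  assumes "play A i j = None" "j \<le> k"
  shows "play A i k = None"
  using assms(2) by (induction k rule: dec_induct) (use assms(1) in auto)

lemma play_Suc_eq_Some:
  "play A i (Suc j) = Some y \<longleftrightarrow> (\<exists>z. play A i j = Some z \<and> succ A z = Some y)"
  by (simp add: bind_eq_Some_conv)

lemma play_shift_eq: "play A i a = play A i b \<Longrightarrow> play A i (a + d) = play A i (b + d)"
  by (induction d) auto

lemma play_total_if_repeats:
  assumes "play A i a = play A i b" "a < b" "play A i b \<noteq> None"
  shows "play A i j \<noteq> None"
proof (induction j rule: less_induct)
  case (less j)
  show ?case
  proof (cases "j \<le> b")
    case True
    then show ?thesis using assms(3) play_None_mono by metis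
  next
    case False
    define d where "d = j - b"
    with False have j: "j = b + d" by simp
    then have "play A i j = play A i (a + d)" using play_shift_eq[OF assms(1)] by simp
    moreover have "a + d < j" using j assms(2) by simp
    ultimately show ?thesis using less by simp
  qed
qed

lemma Least_play_None_eq:
  "play A i M \<noteq> None \<Longrightarrow> play A i (Suc M) = None \<Longrightarrow> (LEAST j. play A i (Suc j) = None) = M"
  by (rule Least_Suc_eq_None) (auto intro: play_None_mono)

lemma play_den_exit:
  assumes "play A i M = Some (Exit k)" "play A i (Suc M) = None"
  shows "play_den A i = (if M = 1 then Plain k else Weighted (\<Sum>j=1..M-1. posw A (the (play A i j))) k)"
proof -
  have "M \<noteq> 0" using assms(1) by (cases M) auto
  moreover have L: "(LEAST j. play A i (Suc j) = None) = M"
    using assms by (intro Least_play_None_eq) auto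
  moreover have "\<exists>j. play A i j = None" using assms(2) by blast
  ultimately show ?thesis unfolding play_den_def Let_def L assms(1) option.sel by simp
qed

lemma play_den_dead_end:
  assumes "play A i M = Some (Pos q)" "play A i (Suc M) = None"
  shows "play_den A i = (if role A q = PAll then EStar else AStar)"
proof -
  have L: "(LEAST j. play A i (Suc j) = None) = M"
    using assms by (intro Least_play_None_eq) auto
  moreover have "\<exists>j. play A i j = None" using assms(2) by blast
  ultimately show ?thesis unfolding play_den_def Let_def L assms(1) option.sel by simp
qed

lemma play_den_total:
  assumes "\<And>j. play A i j \<noteq> None"
  shows "play_den A i = (if mp_ok (\<lambda>j. posw A (the (play A i j))) then EStar else AStar)"
proof -
  have total: "\<not> (\<exists>j. play A i j = None)" using assms by blast
  show ?thesis unfolding play_den_def if_not_P[OF total] ..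
qed

lemma tdp_None_mono:
  assumes "tdp l f i j = None" "j \<le> k"
  shows "tdp l f i k = None"
  using assms(2)
proof (induction k rule: dec_induct)
  case (step k)
  then have "k \<noteq> 0" by (metis option.distinct(1) tdp.simps(1))
  with step show ?case by simp
qed (fact assms(1))

lemma tdp_den_stop:
  assumes "tdp l f i K = Some y" "tdp l f i (Suc K) = None"
  shows "tdp_den l (tdp l f i) =
    (let S = (\<Sum>j=1..K. twt (the (tdp l f i j))) in
        case y of
          EStar \<Rightarrow> EStar
        | AStar \<Rightarrow> AStar
        | Plain x \<Rightarrow> (if x > l \<and> (\<forall>j\<in>{1..<K}. in_l l (the (tdp l f i j))) then Plain (x - l)
                     else if x > l \<and> (\<exists>j\<in>{1..<K}. weighted_l l (the (tdp l f i j))) then Weighted S (x - l)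
                     else undefined)
        | Weighted r x \<Rightarrow> (if x > l then Weighted S (x - l) else undefined))"
proof -
  have L: "(LEAST j. tdp l f i (Suc j) = None) = K"
    using assms by (intro Least_Suc_eq_None) (auto intro: tdp_None_mono)
  have stops: "\<exists>j. tdp l f i j = None" using assms(2) by blast
  show ?thesis unfolding tdp_den_def if_P[OF stops] L Let_def assms(1) option.sel ..
qed

lemma tdp_den_total:
  assumes "\<And>j. tdp l f i j \<noteq> None"
  shows "tdp_den l (tdp l f i) =
       (let J = {j. j \<ge> 1 \<and> weighted_l l (the (tdp l f i j))};
            w' = (\<lambda>t. twt (the (tdp l f i (enumerate J (t - 1))))) in
        if infinite J \<and> mp_ok w' then EStar else AStar)"
proof -
  have total: "\<not> (\<exists>j. tdp l f i j = None)" using assms by blast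
  show ?thesis unfolding tdp_den_def if_not_P[OF total] ..
qed

fun exit_index :: "nat T \<Rightarrow> nat" where
  "exit_index (Plain k) = k"
| "exit_index (Weighted r k) = k"
| "exit_index _ = 0"

definition is_feedback :: "nat \<Rightarrow> nat T \<Rightarrow> bool" where
  "is_feedback l y \<longleftrightarrow> in_l l y \<or> weighted_l l y"

lemma in_l_simps [simp]:
  "in_l l (Plain k) \<longleftrightarrow> k \<in> {1..l}" "\<not> in_l l (Weighted r k)" "\<not> in_l l EStar" "\<not> in_l l AStar"
  by (auto simp: in_l_def)

lemma weighted_l_simps [simp]:
  "weighted_l l (Weighted r k) \<longleftrightarrow> k \<in> {1..l}" "\<not> weighted_l l (Plain k)"
  "\<not> weighted_l l EStar" "\<not> weighted_l l AStar"
  by (auto simp: weighted_l_def)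

lemma is_feedback_simps [simp]:
  "is_feedback l (Plain k) \<longleftrightarrow> k \<in> {1..l}" "is_feedback l (Weighted r k) \<longleftrightarrow> k \<in> {1..l}"
  "\<not> is_feedback l EStar" "\<not> is_feedback l AStar"
  by (auto simp: is_feedback_def)

lemma tstep_eq: "tstep l f y = (if is_feedback l y then Some (f (exit_index y)) else None)"
  by (cases y) auto

lemma exit_index_if_feedback: "is_feedback l y \<Longrightarrow> exit_index y \<in> {1..l}"
  by (cases y) auto

text \<open>The denotation of a play that first collects the weight \<open>S\<close> on a prefix (\<open>weighted\<close> tells
  whether that prefix visits a position) and then ends as described by \<open>y\<close>, with the exit
  \<open>l + k\<close> renamed to \<open>k\<close>.\<close>

definition prefixed_den :: "nat \<Rightarrow> bool \<Rightarrow> real \<Rightarrow> nat T \<Rightarrow> nat T" where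
  "prefixed_den l weighted S y = (case y of
      Plain k \<Rightarrow> if weighted then Weighted S (k - l) else Plain (k - l)
    | Weighted r k \<Rightarrow> Weighted (S + r) (k - l)
    | _ \<Rightarrow> y)"

definition enumerate1 :: "nat set \<Rightarrow> nat \<Rightarrow> nat" where
  "enumerate1 J U = (case U of 0 \<Rightarrow> 0 | Suc U' \<Rightarrow> enumerate J U')"

lemma enumerate1_0 [simp]: "enumerate1 J 0 = 0"
  and enumerate1_Suc [simp]: "enumerate1 J (Suc U) = enumerate J U"
  by (simp_all add: enumerate1_def)

lemma enumerate1_less_Suc:
  assumes "infinite J" "0 \<notin> J"
  shows "enumerate1 J U < enumerate1 J (Suc U)"
proof (cases U)
  case 0
  then show ?thesis using enumerate_in_set[OF assms(1), of 0] assms(2) by (cases "enumerate J 0") auto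
qed (simp add: enumerate_step[OF assms(1)])

lemma not_in_between_enumerate1:
  assumes "infinite J" "enumerate1 J U < t" "t < enumerate1 J (Suc U)"
  shows "t \<notin> J"
proof
  assume "t \<in> J"
  then obtain k where k: "t = enumerate J k" using enumerate_Ex[OF assms(1)] by metis
  show False
  proof (cases U)
    case 0
    then show False using assms k by simp
  next
    case (Suc U')
    then show False using assms k by simp
  qed
qed

lemma sum_enumerate1:
  fixes W :: "nat \<Rightarrow> real"
  assumes J: "infinite J" "0 \<notin> J" and zero: "\<And>t. 0 < t \<Longrightarrow> t \<notin> J \<Longrightarrow> W t = 0"
  shows "(\<Sum>u=1..U. W (enumerate J (u - 1))) = (\<Sum>t=1..enumerate1 J U. W t)"
proof (induction U)
  case (Suc U)
  let ?a = "enumerate1 J U" and ?b = "enumerate1 J (Suc U)"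
  have ab: "?a < ?b" by (rule enumerate1_less_Suc[OF J])
  have "(\<Sum>t=?a+1..?b. W t) = (\<Sum>t=?a+1..?b. if t = ?b then W t else 0)"
    using zero not_in_between_enumerate1[OF J(1), of U] by (intro sum.cong) auto
  also have "\<dots> = W ?b" using ab by simp
  finally have "(\<Sum>t=1..?b. W t) = (\<Sum>t=1..?a. W t) + W ?b"
    using sum.ub_add_nat[of 1 ?a W "?b - ?a"] ab by simp
  then show ?case using Suc.IH by simp
qed simp

section \<open>The trace of a deterministic open game\<close>

lemma srcs_simps [simp]:
  "Entr e \<in> srcs N Q \<longleftrightarrow> e \<in> {1..N}" "Exit k \<notin> srcs N Q" "Pos q \<in> srcs N Q \<longleftrightarrow> q \<in> Q"
  unfolding srcs_def by auto

lemma tgts_simps [simp]: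
  "Entr e \<notin> tgts N Q" "Exit k \<in> tgts N Q \<longleftrightarrow> k \<in> {1..N}" "Pos q \<in> tgts N Q \<longleftrightarrow> q \<in> Q"
  unfolding tgts_def by auto

lemma hat_inject: "hat l a = hat l b \<longleftrightarrow> a = b"
  by (cases a; cases b) auto

lemma hat_tgts_iff:
  "y \<in> hat l ` tgts n Q \<longleftrightarrow> (\<exists>q\<in>Q. y = Pos q) \<or> (\<exists>k. l < k \<and> k \<le> l + n \<and> y = Exit k)"
proof
  assume "(\<exists>q\<in>Q. y = Pos q) \<or> (\<exists>k. l < k \<and> k \<le> l + n \<and> y = Exit k)"
  then show "y \<in> hat l ` tgts n Q"
  proof
    assume "\<exists>k. l < k \<and> k \<le> l + n \<and> y = Exit k"
    then obtain k where "l < k" "k \<le> l + n" "y = Exit k" by blast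
    then show ?thesis by (intro image_eqI[of _ _ "Exit (k - l)"]) auto
  qed (auto intro: image_eqI[of _ _ y])
qed (auto simp: tgts_def)

locale traced_roPG =
  fixes E :: "'q roMPG" and l m n i :: nat
  assumes roPG: "is_roPG E" and ent_E: "ent E = l + m" and ex_E: "ex E = l + n"
    and entrance: "i \<in> {1..m}"
begin

abbreviation "Q \<equiv> pos E"
abbreviation "tr \<equiv> trace l m n E"
abbreviation "tr_play \<equiv> play tr i"
abbreviation tr_wt :: "nat \<Rightarrow> real" where "tr_wt j \<equiv> posw tr (the (tr_play j))"

lemma finite_Q: "finite Q"
  using roPG unfolding is_roPG_def is_roMPG_def by auto

lemma edge_E_nodes: "(x, y) \<in> edges E \<Longrightarrow> x \<in> srcs (l + m) Q \<and> y \<in> tgts (l + n) Q"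
  using roPG ent_E ex_E unfolding is_roPG_def is_roMPG_def by auto

lemma deterministic_E: "(x, y) \<in> edges E \<Longrightarrow> (x, y') \<in> edges E \<Longrightarrow> y = y'"
  using roPG unfolding is_roPG_def by blast

lemma succ_E_iff: "succ E x = Some y \<longleftrightarrow> (x, y) \<in> edges E"
  using deterministic_E by (rule succ_eq_Some_iff)

lemma entrance_has_edge: "e \<in> {1..l+m} \<Longrightarrow> \<exists>t. (Entr e, t) \<in> edges E"
  using roPG ent_E unfolding is_roPG_def is_roMPG_def by auto

lemma exit_pred_unique: "(s, Exit k) \<in> edges E \<Longrightarrow> (s', Exit k) \<in> edges E \<Longrightarrow> s = s'"
  using edge_E_nodes[of s "Exit k"] roPG ex_E unfolding is_roPG_def is_roMPG_def by auto

lemma no_edge_from_Exit: "(Exit k, y) \<notin> edges E"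
  using edge_E_nodes[of "Exit k" y] by auto

lemma wt_trace [simp]: "wt tr = wt E"
  by (simp add: trace_def)

lemma posw_trace [simp]: "posw tr y = posw E y"
  by (cases y) auto

lemma role_trace [simp]: "role tr = role E"
  by (simp add: trace_def)

lemma play_E_Suc_eq_Some:
  "play E e (Suc r) = Some y \<longleftrightarrow> (\<exists>z. play E e r = Some z \<and> (z, y) \<in> edges E)"
  unfolding play_Suc_eq_Some succ_E_iff ..

lemma play_E_edge: "play E e (Suc r) = Some y \<Longrightarrow> (the (play E e r), y) \<in> edges E"
  using play_E_Suc_eq_Some by force

lemma play_E_node_cases:
  assumes "0 < r" "play E e r = Some y"
  shows "(\<exists>q\<in>Q. y = Pos q) \<or> (\<exists>k\<in>{1..l+n}. y = Exit k)"
proof -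
  obtain r' where "r = Suc r'" using assms(1) gr0_implies_Suc by blast
  then have "y \<in> tgts (l + n) Q" using play_E_edge assms(2) edge_E_nodes by blast
  then show ?thesis unfolding tgts_def by auto
qed

lemma play_E_stops_at_Exit: "play E e r = Some (Exit k) \<Longrightarrow> play E e (Suc r) = None"
  using no_edge_from_Exit by (simp add: succ_eq_None_iff)

lemma positions_before_stop_le_card:
  assumes stop: "play E e (Suc M) = None" and pos: "\<forall>r\<in>{1..<M}. \<exists>q. play E e r = Some (Pos q)"
  shows "M - 1 \<le> card Q"
proof -
  let ?node = "\<lambda>r. the (play E e r)"
  have "inj_on ?node {1..<M}"
  proof (rule linorder_inj_onI)
    fix a b assume ab: "a < b" "a \<in> {1..<M}" "b \<in> {1..<M}"
    then have some: "play E e a \<noteq> None" "play E e b \<noteq> None" using pos by fastforce+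
    show "?node a \<noteq> ?node b"
    proof
      assume "?node a = ?node b"
      with some have "play E e a = play E e b" by (metis option.collapse)
      then show False using play_total_if_repeats[OF _ ab(1) some(2)] stop by blast
    qed
  qed auto
  moreover have "?node r \<in> Pos ` Q" if r: "r \<in> {1..<M}" for r
  proof -
    obtain q where q: "play E e r = Some (Pos q)" using pos r by blast
    then have "q \<in> Q" using play_E_node_cases[of r e "Pos q"] r by auto
    then show ?thesis using q by simp
  qed
  then have "?node ` {1..<M} \<subseteq> Pos ` Q" by blast
  ultimately have "card {1..<M} \<le> card (Pos ` Q)"
    using card_inj_on_le finite_Q by blast
  also have "\<dots> \<le> card Q" using card_image_le finite_Q by blast
  finally show ?thesis by simp
qed

lemma entrance_play_cases:
  assumes "e \<in> {1..l+m}"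
  obtains (exit) M k where "0 < M" "play E e M = Some (Exit k)" "play E e (Suc M) = None"
      "\<forall>r\<in>{1..<M}. \<exists>q. play E e r = Some (Pos q)" "k \<in> {1..l+n}"
  | (dead_end) M q where "play E e M = Some (Pos q)" "play E e (Suc M) = None"
      "\<forall>r\<in>{1..M}. \<exists>q. play E e r = Some (Pos q)"
  | (total) "\<forall>r>0. \<exists>q. play E e r = Some (Pos q)"
proof -
  have first: "play E e 1 \<noteq> None"
    using entrance_has_edge[OF assms] succ_E_iff by auto
  have pos: "\<exists>q. play E e r = Some (Pos q)" if r: "0 < r" and later: "play E e (Suc r) \<noteq> None" for r
  proof -
    obtain y where y: "play E e r = Some y" using later by fastforce
    then have "\<nexists>k. y = Exit k" using later play_E_stops_at_Exit by metis
    then show ?thesis using play_E_node_cases[OF r y] y by blast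
  qed
  show thesis
  proof (cases "\<exists>r. play E e (Suc r) = None")
    case True
    define M where "M = (LEAST r. play E e (Suc r) = None)"
    have stop: "play E e (Suc M) = None" unfolding M_def using True by (rule LeastI_ex)
    have before: "play E e (Suc r) \<noteq> None" if "r < M" for r
      using that not_less_Least unfolding M_def by blast
    have "0 < M" using stop first by (cases M) auto
    then obtain y where y: "play E e M = Some y" using before[of "M - 1"] by fastforce
    have inner: "\<forall>r\<in>{1..<M}. \<exists>q. play E e r = Some (Pos q)" using pos before by simp
    from play_E_node_cases[OF \<open>0 < M\<close> y] show thesis
    proof (elim disjE bexE)
      fix q assume "q \<in> Q" "y = Pos q"
      then show thesis using dead_end[of M q] y stop inner by (fastforce simp: le_less)
    next
      fix k assume "k \<in> {1..l+n}" "y = Exit k"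
      then show thesis using exit[of M k] \<open>0 < M\<close> y stop inner by blast
    qed
  next
    case False
    then show thesis using total pos by blast
  qed
qed

lemma play_E_total_if_positions:
  "\<forall>r>0. \<exists>q. play E e r = Some (Pos q) \<Longrightarrow> play E e r \<noteq> None"
  by (cases "r = 0") (auto simp del: play.simps(2))

lemma entrance_play_den_cases:
  assumes "e \<in> {1..l+m}"
  obtains (star) "play_den E e = EStar \<or> play_den E e = AStar"
  | (exit) M k where "0 < M" "play E e M = Some (Exit k)" "play E e (Suc M) = None"
      "\<forall>r\<in>{1..<M}. \<exists>q. play E e r = Some (Pos q)" "k \<in> {1..l+n}"
      "play_den E e = (if M = 1 then Plain k else Weighted (\<Sum>j=1..M-1. posw E (the (play E e j))) k)"
  using assms
proof (cases rule: entrance_play_cases)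
  case (exit M k)
  then show thesis using that(2) play_den_exit[OF exit(2,3)] by blast
next
  case (dead_end M q)
  then show thesis using that(1) play_den_dead_end[OF dead_end(1,2)] by simp
next
  case total
  then show thesis
    using that(1) play_den_total[of E e] play_E_total_if_positions[OF total] by simp
qed

lemma play_den_E_exit_range:
  assumes "e \<in> {1..l+m}" "play_den E e \<noteq> EStar" "play_den E e \<noteq> AStar"
  shows "exit_index (play_den E e) \<in> {1..l+n}"
  using assms(1) by (cases rule: entrance_play_den_cases) (use assms(2,3) in auto)

lemma feedback_segment:
  assumes "e \<in> {1..l+m}" "is_feedback l (play_den E e)"
  obtains M k where "0 < M" "M - 1 \<le> card Q" "k \<in> {1..l}"
    "play E e M = Some (Exit k)" "play E e (Suc M) = None"
    "\<forall>r\<in>{1..<M}. \<exists>q. play E e r = Some (Pos q)"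
    "play_den E e = (if M = 1 then Plain k else Weighted (\<Sum>j=1..M-1. posw E (the (play E e j))) k)"
  using assms(1)
proof (cases rule: entrance_play_den_cases)
  case star
  then show thesis using assms(2) by auto
next
  case (exit M k)
  then have "k \<in> {1..l}" using assms(2) by (auto split: if_splits)
  then show thesis
    using that exit positions_before_stop_le_card[OF exit(3,4)] by blast
qed

definition feedback_reach :: "'q node \<Rightarrow> 'q node set" where
  "feedback_reach x = {y. \<exists>is. set is \<subseteq> {1..l} \<and> chain (edges E) x is y \<and> y \<in> hat l ` tgts n Q}"

lemma edges_trace_iff:
  "(s, t) \<in> edges tr \<longleftrightarrow> s \<in> srcs m Q \<and> t \<in> tgts n Q \<and> hat l t \<in> feedback_reach (hat l s)"
  unfolding trace_def feedback_reach_def by auto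

lemma feedback_reach_Pos:
  assumes "(x, Pos q) \<in> edges E"
  shows "feedback_reach x = {Pos q}"
proof -
  have "q \<in> Q" using edge_E_nodes[OF assms] by simp
  moreover have "y = Pos q" if "chain (edges E) x js y" for js y
    using that assms deterministic_E by (cases js) auto
  ultimately show ?thesis
    using assms unfolding feedback_reach_def hat_tgts_iff by (auto intro!: exI[of _ "[]"])
qed

lemma feedback_reach_outer_Exit:
  assumes "(x, Exit k) \<in> edges E" "l < k"
  shows "feedback_reach x = {Exit k}"
proof -
  have "k \<le> l + n" using edge_E_nodes[OF assms(1)] by simp
  moreover have "y = Exit k" if "chain (edges E) x js y" "set js \<subseteq> {1..l}" for js y
    using that assms deterministic_E by (cases js) fastforce+
  ultimately show ?thesis
    using assms unfolding feedback_reach_def hat_tgts_iff by (auto intro!: exI[of _ "[]"])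
qed

lemma feedback_reach_feedback_Exit:
  assumes edge: "(x, Exit k) \<in> edges E" and k: "k \<in> {1..l}"
  shows "feedback_reach x = feedback_reach (Entr k)"
proof (intro equalityI subsetI)
  fix y assume "y \<in> feedback_reach x"
  then obtain js where js: "set js \<subseteq> {1..l}" "chain (edges E) x js y" "y \<in> hat l ` tgts n Q"
    unfolding feedback_reach_def by blast
  show "y \<in> feedback_reach (Entr k)"
  proof (cases js)
    case Nil
    then have "y = Exit k" using js(2) edge deterministic_E by auto
    then show ?thesis using js(3) k unfolding hat_tgts_iff by auto
  next
    case (Cons j js')
    then have "j = k" using js(2) edge deterministic_E by auto
    then show ?thesis unfolding feedback_reach_def using js Cons by auto
  qed
next
  fix y assume "y \<in> feedback_reach (Entr k)"
  then obtain js where "set js \<subseteq> {1..l}" "chain (edges E) (Entr k) js y" "y \<in> hat l ` tgts n Q"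
    unfolding feedback_reach_def by blast
  then show "y \<in> feedback_reach x"
    unfolding feedback_reach_def using edge k by (auto intro!: exI[of _ "k # js"])
qed

lemma feedback_reach_dead_end: "\<nexists>y. (x, y) \<in> edges E \<Longrightarrow> feedback_reach x = {}"
proof -
  assume "\<nexists>y. (x, y) \<in> edges E"
  then have "\<not> chain (edges E) x js y" for js y by (cases js) auto
  then show ?thesis unfolding feedback_reach_def by blast
qed

lemma feedback_reach_unique: "y \<in> feedback_reach x \<Longrightarrow> y' \<in> feedback_reach x \<Longrightarrow> y = y'"
proof -
  assume y: "y \<in> feedback_reach x" and y': "y' \<in> feedback_reach x"
  then obtain js where "set js \<subseteq> {1..l}" "chain (edges E) x js y" "y \<in> hat l ` tgts n Q"
    unfolding feedback_reach_def by blast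
  then show "y = y'"
    using y'
  proof (induction js arbitrary: x)
    case Nil
    then have "(x, y) \<in> edges E" by simp
    then have "feedback_reach x = {y}"
      using Nil.prems(3) feedback_reach_Pos feedback_reach_outer_Exit unfolding hat_tgts_iff by blast
    then show ?case using Nil.prems(4) by simp
  next
    case (Cons j js)
    then have "feedback_reach x = feedback_reach (Entr j)"
      by (intro feedback_reach_feedback_Exit) auto
    with Cons.prems show ?case by (intro Cons.IH[of "Entr j"]) auto
  qed
qed

lemma deterministic_trace: "(s, t) \<in> edges tr \<Longrightarrow> (s, t') \<in> edges tr \<Longrightarrow> t = t'"
  unfolding edges_trace_iff using feedback_reach_unique hat_inject by metis

lemma succ_trace_iff: "succ tr x = Some y \<longleftrightarrow> (x, y) \<in> edges tr"
  using deterministic_trace by (rule succ_eq_Some_iff)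

text \<open>After \<open>j\<close> moves the traced play stands at a node from which the trace continues exactly
  as \<open>E\<close> continues from \<open>x\<close>.\<close>

definition synced :: "nat \<Rightarrow> 'q node \<Rightarrow> bool" where
  "synced j x \<longleftrightarrow> (\<exists>s. tr_play j = Some s \<and> s \<in> srcs m Q \<and> feedback_reach (hat l s) = feedback_reach x)"

lemma synced_start: "synced 0 (Entr (l + i))"
  using entrance by (simp add: synced_def)

lemma synced_Pos_step:
  assumes "synced j x" "(x, Pos q) \<in> edges E"
  shows "tr_play (Suc j) = Some (Pos q) \<and> synced (Suc j) (Pos q)"
proof -
  obtain s where s: "tr_play j = Some s" "s \<in> srcs m Q" "feedback_reach (hat l s) = feedback_reach x"
    using assms(1) unfolding synced_def by blast
  have "q \<in> Q" using edge_E_nodes[OF assms(2)] by simp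
  with s feedback_reach_Pos[OF assms(2)] have "(s, Pos q) \<in> edges tr"
    unfolding edges_trace_iff by simp
  then have "tr_play (Suc j) = Some (Pos q)" using s(1) succ_trace_iff by simp
  then show ?thesis unfolding synced_def using \<open>q \<in> Q\<close> by auto
qed

lemma synced_feedback_Exit:
  "synced j x \<Longrightarrow> (x, Exit k) \<in> edges E \<Longrightarrow> k \<in> {1..l} \<Longrightarrow> synced j (Entr k)"
  unfolding synced_def using feedback_reach_feedback_Exit by simp

lemma tr_play_outer_Exit:
  assumes "synced j x" "(x, Exit k) \<in> edges E" "l < k"
  shows "tr_play (Suc j) = Some (Exit (k - l)) \<and> tr_play (Suc (Suc j)) = None"
proof -
  obtain s where s: "tr_play j = Some s" "s \<in> srcs m Q" "feedback_reach (hat l s) = feedback_reach x"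
    using assms(1) unfolding synced_def by blast
  have "k \<le> l + n" using edge_E_nodes[OF assms(2)] by simp
  then have "Exit (k - l) \<in> tgts n Q" using assms(3) by (simp add: le_diff_conv2)
  with s assms(3) feedback_reach_outer_Exit[OF assms(2,3)] have "(s, Exit (k - l)) \<in> edges tr"
    unfolding edges_trace_iff by simp
  then have "tr_play (Suc j) = Some (Exit (k - l))" using s(1) succ_trace_iff by simp
  moreover have "succ tr (Exit (k - l)) = None" unfolding succ_eq_None_iff edges_trace_iff by simp
  ultimately show ?thesis by simp
qed

lemma tr_play_dead_end:
  assumes "synced j x" "\<nexists>y. (x, y) \<in> edges E"
  shows "tr_play (Suc j) = None"
proof -
  obtain s where s: "tr_play j = Some s" "feedback_reach (hat l s) = feedback_reach x"
    using assms(1) unfolding synced_def by blast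
  then have "succ tr s = None"
    using feedback_reach_dead_end[OF assms(2)] unfolding succ_eq_None_iff edges_trace_iff by simp
  then show ?thesis using s(1) by simp
qed

lemma synced_along_positions:
  assumes "synced J (Entr e)" "\<forall>r\<in>{1..R}. \<exists>q. play E e r = Some (Pos q)" "r \<le> R"
  shows "synced (J + r) (the (play E e r)) \<and> (0 < r \<longrightarrow> tr_play (J + r) = play E e r)"
  using assms(3)
proof (induction r)
  case (Suc r)
  obtain q where q: "play E e (Suc r) = Some (Pos q)" using assms(2) Suc.prems by fastforce
  then obtain z where z: "play E e r = Some z" "(z, Pos q) \<in> edges E"
    using play_E_Suc_eq_Some by blast
  have "synced (J + r) z" using Suc z(1) by simp
  from synced_Pos_step[OF this z(2)] show ?case using q by simp
qed (use assms(1) in simp)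

lemma sum_tr_wt_along_positions:
  assumes "synced J (Entr e)" "\<forall>r\<in>{1..R}. \<exists>q. play E e r = Some (Pos q)"
  shows "(\<Sum>j=1..J + R. tr_wt j) = (\<Sum>j=1..J. tr_wt j) + (\<Sum>r=1..R. posw E (the (play E e r)))"
proof -
  have "(\<Sum>j=J+1..J+R. tr_wt j) = (\<Sum>r=1..R. tr_wt (r + J))"
    using sum.shift_bounds_cl_nat_ivl[of tr_wt 1 J R] by (simp add: add.commute)
  also have "\<dots> = (\<Sum>r=1..R. posw E (the (play E e r)))"
    using synced_along_positions[OF assms] by (intro sum.cong) (auto simp: add.commute)
  finally show ?thesis using sum.ub_add_nat[of 1 J tr_wt R] by simp
qed

lemma tr_play_Pos_in_Q: "tr_play j = Some (Pos q) \<Longrightarrow> q \<in> Q"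
proof (cases j)
  case (Suc j')
  assume "tr_play j = Some (Pos q)"
  then obtain s where "(s, Pos q) \<in> edges tr"
    using Suc play_Suc_eq_Some succ_trace_iff by metis
  then show ?thesis unfolding edges_trace_iff by simp
qed simp

lemma abs_tr_wt_le: "tr_play j \<noteq> None \<Longrightarrow> \<bar>tr_wt j\<bar> \<le> (\<Sum>q\<in>Q. \<bar>wt E q\<bar>)"
proof -
  assume "tr_play j \<noteq> None"
  then obtain s where s: "tr_play j = Some s" by blast
  have "0 \<le> (\<Sum>q\<in>Q. \<bar>wt E q\<bar>)" by (simp add: sum_nonneg)
  moreover have "\<bar>wt E q\<bar> \<le> (\<Sum>q\<in>Q. \<bar>wt E q\<bar>)" if "s = Pos q" for q
    using tr_play_Pos_in_Q[of j q] s that finite_Q by (intro member_le_sum) auto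
  ultimately show ?thesis using s by (cases s) auto
qed

lemma tr_play_total_after_synced:
  assumes synced: "synced J (Entr e)" and positions: "\<forall>r>0. \<exists>q. play E e r = Some (Pos q)"
  shows "tr_play j \<noteq> None"
proof (cases "j \<le> J")
  case True
  have "tr_play J \<noteq> None" using synced unfolding synced_def by auto
  then show ?thesis by (metis play_None_mono True)
next
  case False
  have initial: "\<forall>r\<in>{1..j-J}. \<exists>q. play E e r = Some (Pos q)"
  proof
    fix r assume "r \<in> {1..j-J}"
    then have "0 < r" by simp
    then show "\<exists>q. play E e r = Some (Pos q)" using positions by blast
  qed
  then have "tr_play (J + (j - J)) = play E e (j - J)"
    using synced_along_positions[OF synced initial order_refl] False by simp
  moreover have "0 < j - J" using False by simp
  then obtain q where "play E e (j - J) = Some (Pos q)" using positions by blast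
  ultimately show ?thesis using False by simp
qed

lemma play_den_trace_after_synced_total:
  assumes synced: "synced J (Entr e)" and positions: "\<forall>r>0. \<exists>q. play E e r = Some (Pos q)"
  shows "play_den tr i = play_den E e"
proof -
  have total: "tr_play j \<noteq> None" for j
    using tr_play_total_after_synced[OF assms] .
  have "(\<Sum>j=1..J + U. tr_wt j) = (\<Sum>j=1..J. tr_wt j) + (\<Sum>r=1..U. posw E (the (play E e r)))" for U
    using sum_tr_wt_along_positions[OF synced, of U] positions by simp
  then have "(\<Sum>j=1..U + J. tr_wt j) = (\<Sum>j=1..J. tr_wt j) + (\<Sum>r=1..U. posw E (the (play E e r)))" for U
    by (metis add.commute)
  then have "mp_ok tr_wt \<longleftrightarrow> mp_ok (\<lambda>r. posw E (the (play E e r)))"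
    using abs_tr_wt_le[OF total] by (intro mp_ok_iff_block_sums[where c = "\<lambda>U. U + J" and C = 1]) 
      (auto simp: strict_mono_def)
  then show ?thesis
    using play_den_total[of tr i] play_den_total[of E e] total play_E_total_if_positions[OF positions]
    by simp
qed

lemma play_den_trace_after_synced:
  assumes synced: "synced J (Entr e)" and e: "e \<in> {1..l+m}"
    and final: "\<not> is_feedback l (play_den E e)"
  shows "play_den tr i = prefixed_den l (J \<noteq> 0) (\<Sum>j=1..J. tr_wt j) (play_den E e)"
  using e
proof (cases rule: entrance_play_cases)
  case (exit M k)
  note den = play_den_exit[OF exit(2,3)]
  have "l < k" using final exit(5) unfolding den by (auto split: if_splits)
  have positions: "\<forall>r\<in>{1..M-1}. \<exists>q. play E e r = Some (Pos q)" using exit(4) by auto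
  have "synced (J + (M - 1)) (the (play E e (M - 1)))"
    using synced_along_positions[OF synced positions order_refl] by blast
  moreover have "(the (play E e (M - 1)), Exit k) \<in> edges E"
    using play_E_edge[of e "M - 1"] exit(1,2) by simp
  ultimately have "tr_play (J + M) = Some (Exit (k - l)) \<and> tr_play (Suc (J + M)) = None"
    using tr_play_outer_Exit[OF _ _ \<open>l < k\<close>] exit(1) by fastforce
  then have "play_den tr i = (if J + M = 1 then Plain (k - l) else Weighted (\<Sum>j=1..J+M-1. tr_wt j) (k - l))"
    using play_den_exit by blast
  moreover have "(\<Sum>j=1..J+M-1. tr_wt j) = (\<Sum>j=1..J. tr_wt j) + (\<Sum>r=1..M-1. posw E (the (play E e r)))"
    using sum_tr_wt_along_positions[OF synced positions] exit(1) by simp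
  ultimately show ?thesis using den exit(1) by (auto simp: prefixed_den_def)
next
  case (dead_end M q)
  have "M \<noteq> 0" using dead_end(1) by (cases M) auto
  then have "tr_play (J + M) = Some (Pos q) \<and> synced (J + M) (Pos q)"
    using synced_along_positions[OF synced dead_end(3) order_refl] dead_end(1) by simp
  moreover have "\<nexists>y. (Pos q, y) \<in> edges E"
    using dead_end(1,2) succ_eq_None_iff by fastforce
  ultimately have "tr_play (J + M) = Some (Pos q)" "tr_play (Suc (J + M)) = None"
    using tr_play_dead_end by blast+
  then show ?thesis
    using play_den_dead_end[of tr i "J + M" q] play_den_dead_end[OF dead_end(1,2)]
    by (simp add: prefixed_den_def)
next
  case total
  then show ?thesis
    using play_den_trace_after_synced_total[OF synced] play_den_total[of E e] play_E_total_if_positions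
    by (auto simp: prefixed_den_def)
qed

section \<open>Segments of the traced denotation of plays\<close>

abbreviation "v \<equiv> tdp l (play_den E) i"

definition feedback_upto :: "nat \<Rightarrow> bool" where
  "feedback_upto t \<longleftrightarrow> (\<forall>u\<in>{1..t}. \<exists>y. v u = Some y \<and> is_feedback l y)"

definition seg_entrance :: "nat \<Rightarrow> nat" where
  "seg_entrance t = exit_index (the (v t))"

definition exit_time :: "nat \<Rightarrow> nat" where
  "exit_time e = (LEAST M. play E e (Suc M) = None)"

text \<open>The number of moves of the traced play during the first \<open>t\<close> segments of \<open>v\<close>: a segment
  reaching its exit at step \<open>M\<close> visits \<open>M - 1\<close> positions.\<close>

primrec tr_steps :: "nat \<Rightarrow> nat" where
  "tr_steps 0 = 0"
| "tr_steps (Suc t) = tr_steps t + (exit_time (seg_entrance t) - 1)"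

lemma feedback_upto_0: "feedback_upto 0"
  by (simp add: feedback_upto_def)

lemma feedback_upto_Suc:
  "feedback_upto (Suc t) \<longleftrightarrow> feedback_upto t \<and> (\<exists>y. v (Suc t) = Some y \<and> is_feedback l y)"
  unfolding feedback_upto_def by (auto simp: atLeastAtMostSuc_conv)

lemma feedback_upto_elem: "feedback_upto t \<Longrightarrow> u \<in> {1..t} \<Longrightarrow> \<exists>y. v u = Some y \<and> is_feedback l y"
  unfolding feedback_upto_def by blast

lemma v_Suc_if_feedback_upto:
  assumes "feedback_upto t"
  shows "v (Suc t) = Some (play_den E (seg_entrance t)) \<and> seg_entrance t \<in> {1..l+m}"
proof (cases t)
  case 0
  then show ?thesis using entrance by (simp add: seg_entrance_def)
next
  case (Suc t')
  then obtain y where "v t = Some y" "is_feedback l y"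
    using feedback_upto_elem[OF assms, of t] by auto
  then show ?thesis
    using Suc exit_index_if_feedback[of l y] by (simp add: seg_entrance_def tstep_eq)
qed

lemma seg_entrance_0: "seg_entrance 0 = l + i"
  by (simp add: seg_entrance_def)

lemma seg_entrance_in_range: "feedback_upto t \<Longrightarrow> u \<in> {1..t} \<Longrightarrow> seg_entrance u \<in> {1..l}"
  using feedback_upto_elem exit_index_if_feedback unfolding seg_entrance_def by fastforce

lemma tdp_segment:
  assumes "feedback_upto (Suc t)"
  obtains M where "0 < M" "M - 1 \<le> card Q" "tr_steps (Suc t) = tr_steps t + (M - 1)"
    "seg_entrance (Suc t) \<in> {1..l}" "play E (seg_entrance t) M = Some (Exit (seg_entrance (Suc t)))"
    "\<forall>r\<in>{1..<M}. \<exists>q. play E (seg_entrance t) r = Some (Pos q)"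
    "the (v (Suc t)) = (if M = 1 then Plain (seg_entrance (Suc t))
       else Weighted (\<Sum>j=1..M-1. posw E (the (play E (seg_entrance t) j))) (seg_entrance (Suc t)))"
proof -
  let ?e = "seg_entrance t"
  have "feedback_upto t" and feedback: "\<exists>y. v (Suc t) = Some y \<and> is_feedback l y"
    using assms feedback_upto_Suc by auto
  then have v: "v (Suc t) = Some (play_den E ?e)" and e: "?e \<in> {1..l+m}"
    using v_Suc_if_feedback_upto by auto
  have "is_feedback l (play_den E ?e)" using feedback v by auto
  then obtain M k where M: "0 < M" "M - 1 \<le> card Q" "k \<in> {1..l}"
    "play E ?e M = Some (Exit k)" "play E ?e (Suc M) = None"
    "\<forall>r\<in>{1..<M}. \<exists>q. play E ?e r = Some (Pos q)"
    and den: "play_den E ?e = (if M = 1 then Plain k else Weighted (\<Sum>j=1..M-1. posw E (the (play E ?e j))) k)"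
    using feedback_segment[OF e] by blast
  have k: "seg_entrance (Suc t) = k" unfolding seg_entrance_def[of "Suc t"] v den by simp
  have "exit_time ?e = M" unfolding exit_time_def using M(4,5) by (intro Least_play_None_eq) auto
  show thesis
    by (rule that[of M]) (use M k v den \<open>exit_time ?e = M\<close> in simp_all)
qed

lemma synced_seg_entrance: "feedback_upto t \<Longrightarrow> synced (tr_steps t) (Entr (seg_entrance t))"
proof (induction t)
  case 0
  then show ?case using synced_start by (simp add: seg_entrance_def)
next
  case (Suc t)
  obtain M where M: "0 < M" "tr_steps (Suc t) = tr_steps t + (M - 1)" "seg_entrance (Suc t) \<in> {1..l}"
    "play E (seg_entrance t) M = Some (Exit (seg_entrance (Suc t)))"
    "\<forall>r\<in>{1..<M}. \<exists>q. play E (seg_entrance t) r = Some (Pos q)"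
    by (rule tdp_segment[OF Suc.prems])
  then have exit: "play E (seg_entrance t) (Suc (M - 1)) = Some (Exit (seg_entrance (Suc t)))"
    and positions: "\<forall>r\<in>{1..M-1}. \<exists>q. play E (seg_entrance t) r = Some (Pos q)"
    by auto
  have "synced (tr_steps t) (Entr (seg_entrance t))" using Suc feedback_upto_Suc by blast
  then have "synced (tr_steps (Suc t)) (the (play E (seg_entrance t) (M - 1)))"
    using synced_along_positions[OF _ positions order_refl] M(2) by simp
  then show ?case using synced_feedback_Exit play_E_edge[OF exit] M(3) by blast
qed

lemma sum_twt_v_eq_sum_tr_wt:
  "feedback_upto t \<Longrightarrow> (\<Sum>u=1..t. twt (the (v u))) = (\<Sum>j=1..tr_steps t. tr_wt j)"
proof (induction t)
  case (Suc t)
  obtain M where M: "0 < M" "tr_steps (Suc t) = tr_steps t + (M - 1)"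
    "\<forall>r\<in>{1..<M}. \<exists>q. play E (seg_entrance t) r = Some (Pos q)"
    "the (v (Suc t)) = (if M = 1 then Plain (seg_entrance (Suc t))
       else Weighted (\<Sum>j=1..M-1. posw E (the (play E (seg_entrance t) j))) (seg_entrance (Suc t)))"
    by (rule tdp_segment[OF Suc.prems])
  then have positions: "\<forall>r\<in>{1..M-1}. \<exists>q. play E (seg_entrance t) r = Some (Pos q)" by auto
  have "twt (the (v (Suc t))) = (\<Sum>j=1..M-1. posw E (the (play E (seg_entrance t) j)))"
    using M(4) by simp
  moreover have "feedback_upto t" using Suc.prems feedback_upto_Suc by blast
  ultimately show ?case
    using Suc.IH sum_tr_wt_along_positions[OF synced_seg_entrance positions] M(2) by simp
qed simp

lemma tr_steps_eq_0_iff: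
  "feedback_upto t \<Longrightarrow> tr_steps t = 0 \<longleftrightarrow> (\<forall>u\<in>{1..t}. in_l l (the (v u)))"
proof (induction t)
  case (Suc t)
  obtain M where M: "0 < M" "tr_steps (Suc t) = tr_steps t + (M - 1)" "seg_entrance (Suc t) \<in> {1..l}"
    "the (v (Suc t)) = (if M = 1 then Plain (seg_entrance (Suc t))
       else Weighted (\<Sum>j=1..M-1. posw E (the (play E (seg_entrance t) j))) (seg_entrance (Suc t)))"
    by (rule tdp_segment[OF Suc.prems])
  then have "in_l l (the (v (Suc t))) \<longleftrightarrow> M = 1" by simp
  moreover have "feedback_upto t" using Suc.prems feedback_upto_Suc by blast
  ultimately show ?case using Suc.IH M(1,2) by (auto simp: atLeastAtMostSuc_conv)
qed simp

lemma tdp_last_segment: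
  assumes "\<exists>j. v j = None"
  obtains t where "feedback_upto t" "v (Suc t) = Some (play_den E (seg_entrance t))"
    "seg_entrance t \<in> {1..l+m}" "v (Suc (Suc t)) = None"
proof -
  have "\<exists>j. v (Suc j) = None" using assms by (metis not0_implies_Suc option.distinct(1) tdp.simps(1))
  then obtain K where stop: "v (Suc K) = None" and before: "\<And>j. j < K \<Longrightarrow> v (Suc j) \<noteq> None"
    using exists_least_iff[where P = "\<lambda>j. v (Suc j) = None"] by blast
  have "K \<noteq> 0" using stop by (cases K) auto
  then obtain t where K: "K = Suc t" using not0_implies_Suc by blast
  have "feedback_upto t"
    unfolding feedback_upto_def
  proof
    fix u assume u: "u \<in> {1..t}"
    then obtain y where y: "v u = Some y" using before[of "u - 1"] K by fastforce
    have "v (Suc u) \<noteq> None" using before[of u] u K by simp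
    then have "is_feedback l y" using y u by (cases u) (auto simp: tstep_eq split: if_splits)
    with y show "\<exists>y. v u = Some y \<and> is_feedback l y" by blast
  qed
  with that show thesis using v_Suc_if_feedback_upto stop K by blast
qed

lemma tdp_den_if_stops:
  assumes "\<exists>j. v j = None"
  obtains t where "feedback_upto t" "\<not> is_feedback l (play_den E (seg_entrance t))"
    "tdp_den l v = prefixed_den l (tr_steps t \<noteq> 0) (\<Sum>j=1..tr_steps t. tr_wt j) (play_den E (seg_entrance t))"
proof -
  obtain t where t: "feedback_upto t" "v (Suc t) = Some (play_den E (seg_entrance t))"
    "seg_entrance t \<in> {1..l+m}" "v (Suc (Suc t)) = None"
    using tdp_last_segment[OF assms] by blast
  let ?y = "play_den E (seg_entrance t)"
  have final: "\<not> is_feedback l ?y" using t(2,4) by (auto simp: tstep_eq split: if_splits)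
  have exit: "l < exit_index ?y" if "?y \<noteq> EStar" "?y \<noteq> AStar"
    using play_den_E_exit_range[OF t(3) that] final by (cases ?y) auto
  have sum: "(\<Sum>j=1..Suc t. twt (the (v j))) = (\<Sum>j=1..tr_steps t. tr_wt j) + twt ?y"
    using sum_twt_v_eq_sum_tr_wt[OF t(1)] t(2) by simp
  have plain: "(\<forall>j\<in>{1..t}. in_l l (the (v j))) \<longleftrightarrow> tr_steps t = 0"
    using tr_steps_eq_0_iff[OF t(1)] by simp
  have weighted: "\<exists>j\<in>{1..t}. weighted_l l (the (v j))" if nonzero: "tr_steps t \<noteq> 0"
  proof -
    obtain j where j: "j \<in> {1..t}" "\<not> in_l l (the (v j))" using plain nonzero by blast
    then have "weighted_l l (the (v j))"
      using feedback_upto_elem[OF t(1) j(1)] unfolding is_feedback_def by auto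
    with j(1) show ?thesis by blast
  qed
  have "tdp_den l v = prefixed_den l (tr_steps t \<noteq> 0) (\<Sum>j=1..tr_steps t. tr_wt j) ?y"
    using tdp_den_stop[OF t(2,4)] sum plain weighted exit
    by (cases ?y) (auto simp: prefixed_den_def Let_def atLeastLessThanSuc_atLeastAtMost)
  with that t(1) final show thesis by blast
qed

lemma play_den_trace_if_tdp_stops:
  assumes "\<exists>j. v j = None"
  shows "play_den tr i = tdp_den l v"
proof -
  obtain t where t: "feedback_upto t" "\<not> is_feedback l (play_den E (seg_entrance t))"
    "tdp_den l v = prefixed_den l (tr_steps t \<noteq> 0) (\<Sum>j=1..tr_steps t. tr_wt j) (play_den E (seg_entrance t))"
    using tdp_den_if_stops[OF assms] by blast
  have "seg_entrance t \<in> {1..l+m}" using v_Suc_if_feedback_upto[OF t(1)] by blast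
  with t show ?thesis using play_den_trace_after_synced[OF synced_seg_entrance[OF t(1)]] by simp
qed

lemma plain_segment:
  assumes "feedback_upto (Suc t)" "in_l l (the (v (Suc t)))"
  shows "tr_steps (Suc t) = tr_steps t \<and> (Entr (seg_entrance t), Exit (seg_entrance (Suc t))) \<in> edges E"
proof -
  obtain M where M: "0 < M" "tr_steps (Suc t) = tr_steps t + (M - 1)"
    "play E (seg_entrance t) M = Some (Exit (seg_entrance (Suc t)))"
    "the (v (Suc t)) = (if M = 1 then Plain (seg_entrance (Suc t))
       else Weighted (\<Sum>j=1..M-1. posw E (the (play E (seg_entrance t) j))) (seg_entrance (Suc t)))"
    by (rule tdp_segment[OF assms(1)])
  then have "M = 1" using assms(2) by (auto split: if_splits)
  then show ?thesis using M(2) play_E_edge[of "seg_entrance t" 0] M(3) by simp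
qed

lemma weighted_segment:
  assumes "feedback_upto (Suc t)" "weighted_l l (the (v (Suc t)))"
  shows "tr_steps t < tr_steps (Suc t) \<and> tr_steps (Suc t) \<le> tr_steps t + card Q
    \<and> (\<exists>q. (Pos q, Exit (seg_entrance (Suc t))) \<in> edges E)"
proof -
  obtain M where M: "0 < M" "M - 1 \<le> card Q" "tr_steps (Suc t) = tr_steps t + (M - 1)"
    "play E (seg_entrance t) M = Some (Exit (seg_entrance (Suc t)))"
    "\<forall>r\<in>{1..<M}. \<exists>q. play E (seg_entrance t) r = Some (Pos q)"
    "the (v (Suc t)) = (if M = 1 then Plain (seg_entrance (Suc t))
       else Weighted (\<Sum>j=1..M-1. posw E (the (play E (seg_entrance t) j))) (seg_entrance (Suc t)))"
    by (rule tdp_segment[OF assms(1)])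
  then have "1 < M" using assms(2) by (auto split: if_splits)
  then obtain q where "play E (seg_entrance t) (M - 1) = Some (Pos q)" using M(5) by fastforce
  then have "(Pos q, Exit (seg_entrance (Suc t))) \<in> edges E"
    using play_E_edge[of "seg_entrance t" "M - 1"] M(4) \<open>1 < M\<close> by simp
  then show ?thesis using M(2,3) \<open>1 < M\<close> by auto
qed

context
  assumes tdp_total: "\<And>j. v j \<noteq> None"
begin

lemma feedback_upto_all: "feedback_upto t"
proof (induction t)
  case (Suc t)
  obtain y where y: "v (Suc t) = Some y" using tdp_total[of "Suc t"] by blast
  have "is_feedback l y"
  proof (rule ccontr)
    assume "\<not> is_feedback l y"
    then have "v (Suc (Suc t)) = None" using y by (simp add: tstep_eq)
    then show False using tdp_total by blast
  qed
  then show ?case using Suc.IH y feedback_upto_Suc by blast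
qed (rule feedback_upto_0)

abbreviation "weighted_segs \<equiv> {j. j \<ge> 1 \<and> weighted_l l (the (v j))}"

lemma plain_segment_edge:
  assumes "0 < b" "in_l l (the (v b))"
  shows "(Entr (seg_entrance (b - 1)), Exit (seg_entrance b)) \<in> edges E"
proof -
  obtain b' where "b = Suc b'" using assms(1) gr0_implies_Suc by blast
  then show ?thesis using plain_segment[OF feedback_upto_all, of b'] assms(2) by simp
qed

lemma seg_entrance_not_reentered:
  assumes start: "t0 = 0 \<or> weighted_l l (the (v t0))" and "0 < b" "in_l l (the (v b))"
  shows "seg_entrance t0 \<noteq> seg_entrance b"
  using start
proof
  assume "t0 = 0"
  then show ?thesis
    using seg_entrance_in_range[OF feedback_upto_all, of b b] assms(2) entrance by (simp add: seg_entrance_0)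
next
  assume weighted: "weighted_l l (the (v t0))"
  then obtain t where "t0 = Suc t" by (cases t0) auto
  then obtain q where q: "(Pos q, Exit (seg_entrance t0)) \<in> edges E"
    using weighted_segment[OF feedback_upto_all] weighted by blast
  show ?thesis
  proof
    assume "seg_entrance t0 = seg_entrance b"
    with q have "(Pos q, Exit (seg_entrance b)) \<in> edges E" by simp
    then have "Pos q = Entr (seg_entrance (b - 1))"
      using plain_segment_edge[OF assms(2,3)] by (rule exit_pred_unique)
    then show False by simp
  qed
qed

lemma seg_entrance_differs_after_last_weighted:
  assumes plain_after: "\<And>b. t0 < b \<Longrightarrow> in_l l (the (v b))"
    and start: "t0 = 0 \<or> weighted_l l (the (v t0))"
  shows "t0 + d < b \<Longrightarrow> seg_entrance (t0 + d) \<noteq> seg_entrance b"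
proof (induction d arbitrary: b)
  case 0
  then show ?case using seg_entrance_not_reentered[OF start _ plain_after] by simp
next
  case (Suc d)
  show ?case
  proof
    assume "seg_entrance (t0 + Suc d) = seg_entrance b"
    then have "(Entr (seg_entrance (t0 + d)), Exit (seg_entrance b)) \<in> edges E"
      using plain_segment_edge[of "t0 + Suc d"] plain_after[of "t0 + Suc d"] by simp
    moreover have "(Entr (seg_entrance (b - 1)), Exit (seg_entrance b)) \<in> edges E"
      using plain_segment_edge[of b] plain_after[of b] Suc.prems by simp
    ultimately have "seg_entrance (t0 + d) = seg_entrance (b - 1)"
      using exit_pred_unique by blast
    moreover have "t0 + d < b - 1" using Suc.prems by linarith
    ultimately show False using Suc.IH[of "b - 1"] by simp
  qed
qed

lemma infinite_weighted_segs: "infinite weighted_segs"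
proof
  assume fin: "finite weighted_segs"
  define t0 where "t0 = Max (insert 0 weighted_segs)"
  have plain_after: "in_l l (the (v b))" if "t0 < b" for b
  proof -
    have "b \<notin> weighted_segs"
    proof
      assume "b \<in> weighted_segs"
      then have "b \<le> t0" unfolding t0_def using fin by (intro Max_ge) auto
      with that show False by simp
    qed
    then show ?thesis
      using feedback_upto_elem[OF feedback_upto_all, of b b] that unfolding is_feedback_def by auto
  qed
  have "t0 \<in> insert 0 weighted_segs" unfolding t0_def using fin by (intro Max_in) auto
  then have start: "t0 = 0 \<or> weighted_l l (the (v t0))" by auto
  have "inj_on seg_entrance {t0..}"
  proof (rule linorder_inj_onI)
    fix a b assume "a < b" "a \<in> {t0..}"
    then show "seg_entrance a \<noteq> seg_entrance b"
      using seg_entrance_differs_after_last_weighted[OF plain_after start, of "a - t0" b] by simp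
  qed auto
  then have "inj_on seg_entrance {Suc t0..}" by (rule inj_on_subset) auto
  moreover have "seg_entrance b \<in> {1..l}" if "b \<in> {Suc t0..}" for b
    using seg_entrance_in_range[OF feedback_upto_all, of b b] that by simp
  then have "seg_entrance ` {Suc t0..} \<subseteq> {1..l}" by blast
  ultimately have "finite {Suc t0..}" using finite_subset finite_imageD by blast
  then show False using infinite_Ici by blast
qed

lemma tr_steps_flat:
  assumes "a \<le> b" and gap: "\<And>t. a < t \<Longrightarrow> t \<le> b \<Longrightarrow> t \<notin> weighted_segs"
  shows "tr_steps b = tr_steps a"
proof -
  have "tr_steps c = tr_steps a" if "a \<le> c" "c \<le> b" for c
    using that
  proof (induction c rule: dec_induct)
    case (step c)
    then have "\<not> weighted_l l (the (v (Suc c)))" using gap[of "Suc c"] by simp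
    then have "in_l l (the (v (Suc c)))"
      using feedback_upto_elem[OF feedback_upto_all, of "Suc c" "Suc c"] unfolding is_feedback_def by auto
    then show ?case using plain_segment[OF feedback_upto_all] step by simp
  qed simp
  from this[OF assms(1) order_refl] show ?thesis .
qed

lemma tr_steps_enumerate1_Suc:
  "tr_steps (enumerate1 weighted_segs U) < tr_steps (enumerate1 weighted_segs (Suc U)) \<and>
   tr_steps (enumerate1 weighted_segs (Suc U)) \<le> tr_steps (enumerate1 weighted_segs U) + card Q"
proof -
  let ?a = "enumerate1 weighted_segs U" and ?b = "enumerate1 weighted_segs (Suc U)"
  have J: "infinite weighted_segs" "0 \<notin> weighted_segs" using infinite_weighted_segs by auto
  have "?a < ?b" by (rule enumerate1_less_Suc[OF J])
  then obtain b' where b: "?b = Suc b'" "?a \<le> b'" by (cases ?b) auto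
  have "?b \<in> weighted_segs" using enumerate_in_set[OF J(1)] by simp
  then have "weighted_l l (the (v (Suc b')))" using b by simp
  moreover have "tr_steps b' = tr_steps ?a"
    using not_in_between_enumerate1[OF J(1), of U] b by (intro tr_steps_flat) auto
  ultimately show ?thesis using weighted_segment[OF feedback_upto_all] b(1) by simp
qed

lemma strict_mono_tr_steps_enumerate1: "strict_mono (\<lambda>U. tr_steps (enumerate1 weighted_segs U))"
  using tr_steps_enumerate1_Suc by (intro strict_monoI_Suc) blast

lemma tr_play_total: "tr_play j \<noteq> None"
proof -
  let ?t = "enumerate1 weighted_segs j"
  have "j \<le> tr_steps ?t" using seq_suble[OF strict_mono_tr_steps_enumerate1] .
  moreover have "tr_play (tr_steps ?t) \<noteq> None"
    using synced_seg_entrance[OF feedback_upto_all] unfolding synced_def by auto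
  ultimately show ?thesis by (metis play_None_mono)
qed

lemma sum_tr_wt_enumerate1:
  "(\<Sum>j=1..tr_steps (enumerate1 weighted_segs U). tr_wt j)
     = (\<Sum>u=1..U. twt (the (v (enumerate weighted_segs (u - 1)))))"
proof -
  have "twt (the (v t)) = 0" if "0 < t" "t \<notin> weighted_segs" for t
    using that feedback_upto_elem[OF feedback_upto_all, of t t] unfolding is_feedback_def in_l_def
    by auto
  then show ?thesis
    using sum_enumerate1[of weighted_segs "\<lambda>t. twt (the (v t))" U] infinite_weighted_segs
      sum_twt_v_eq_sum_tr_wt[OF feedback_upto_all] by simp
qed

lemma play_den_trace_if_tdp_total: "play_den tr i = tdp_den l v"
proof -
  let ?w = "\<lambda>u. twt (the (v (enumerate weighted_segs (u - 1))))"
  have "mp_ok tr_wt \<longleftrightarrow> mp_ok ?w"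
    using strict_mono_tr_steps_enumerate1 tr_steps_enumerate1_Suc abs_tr_wt_le[OF tr_play_total]
      sum_tr_wt_enumerate1
    by (intro mp_ok_iff_block_sums[where P = 0 and C = "card Q"]) auto
  then show ?thesis
    using play_den_total[of tr i, OF tr_play_total] tdp_den_total[of l "play_den E" i, OF tdp_total]
      infinite_weighted_segs
    by (simp add: Let_def)
qed

end

end

theorem proposition3p6:
  fixes E :: "'q roMPG" and l m n i :: nat
  assumes "is_roPG E" and "ent E = l + m" and "ex E = l + n" and "i \<in> {1..m}"
  shows "play_den (trace l m n E) i = tdp_den l (tdp l (play_den E) i)"
proof -
  interpret traced_roPG E l m n i using assms by unfold_locales
  show ?thesis
  proof (cases "\<exists>j. v j = None")
    case True
    then show ?thesis by (rule play_den_trace_if_tdp_stops)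
  next
    case False
    then show ?thesis by (intro play_den_trace_if_tdp_total) auto
  qed
qed

end
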